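(* Let $d,m,n\ge1$, $\alpha=\omega^d\cdot m$, $k\ge1$, $i\ge0$. Suppose that $(X_\ell:\ell<2^in-2^i+1)$ is a stack of $(\alpha,k,i)$-persistent sets. Then $\bigcup_\ell X_\ell$ is $(\alpha\cdot n,k,i)$-persistent, where $\alpha\cdot n$ denotes $\omega^d\cdot(mn)$.
   Context: Strings are finite binary strings with $\preceq$ the initial-segment order; $2^i$ also denotes the set of strings of length $i$; a tree is a set of strings closed under initial segments; a leaf of a finite tree is a $\preceq$-maximal element. For finite $X=\{x_0<\dots<x_n\}$, a finite tree $T$ is $X$-quasistrong if $T\cap 2^{x_i}\ne\emptyset$ for all $i\le n$ and for each $i<n$ every $\sigma\in T\cap2^{x_i}$ has exactly two incompatible extensions in $T\cap 2^{x_{i+1}}$. A stack is a sequence $(X_\ell:\ell<N)$ of nonempty finite sets with $\max X_\ell<\min X_{\ell+1}$. Largeness: $X$ is $\omega$-large if $|X|>\min X$; $X$ is $\omega^d\cdot n$-large if it is the union of a stack of $n$ many $\omega^d$-large sets; $X$ is $\omega^{d+1}$-large if $X=\{\min X\}\cup X_1$ with $\min X_1>\min X$ and $X_1$ $\omega^d\cdot\min X$-large. Persistence ($d,m,k\ge1$, $\alpha=\omega^d\cdot m$, $X$ nonempty finite): $X$ is $(\alpha,k,0)$-persistent iff $\alpha$-large; for $i\ge1$, $X$ is $(\alpha,k,i)$-persistent iff $X$ contains an $(\alpha,k,i-1)$-persistent subset $Y$ such that for every $X$-quasistrong tree $T$ and every $C:T\cap 2^{\max X}\to k$ there exist $c<k$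 and a $Y$-quasistrong finite tree $S\subseteq T$ all of whose leaves have extensions in $C^{-1}(c)$. *)

theory Defs
  imports Main "HOL-Library.Sublist"
begin

text \<open>Strings are finite binary strings (bool lists); the initial-segment order is
  the library's prefix order; the strings of length i are those with length i.\<close>

definition is_tree :: "bool list set \<Rightarrow> bool" where
  "is_tree T \<longleftrightarrow> (\<forall>\<sigma>\<in>T. \<forall>\<tau>. prefix \<tau> \<sigma> \<longrightarrow> \<tau> \<in> T)"

definition leaves :: "bool list set \<Rightarrow> bool list set" where
  "leaves T = {\<sigma> \<in> T. \<not> (\<exists>\<tau>\<in>T. strict_prefix \<sigma> \<tau>)}"

definition quasistrong :: "nat set \<Rightarrow> bool list set \<Rightarrow> bool" where
  "quasistrong X T \<longleftrightarrow> finite X \<and> X \<noteq> {} \<and> finite T \<and> is_tree T \<and>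
     (\<forall>x\<in>X. \<exists>\<sigma>\<in>T. length \<sigma> = x) \<and>
     (\<forall>x\<in>X. \<forall>x'\<in>X. x < x' \<and> (\<forall>z\<in>X. \<not> (x < z \<and> z < x')) \<longrightarrow>
        (\<forall>\<sigma>\<in>T. length \<sigma> = x \<longrightarrow>
           (\<exists>\<tau>1 \<tau>2. {\<tau>\<in>T. length \<tau> = x' \<and> prefix \<sigma> \<tau>} = {\<tau>1, \<tau>2} \<and>
                     \<not> prefix \<tau>1 \<tau>2 \<and> \<not> prefix \<tau>2 \<tau>1)))"

definition is_stack :: "nat set list \<Rightarrow> bool" where
  "is_stack Xs \<longleftrightarrow> (\<forall>Y\<in>set Xs. finite Y \<and> Y \<noteq> {}) \<and>
     (\<forall>l. Suc l < length Xs \<longrightarrow> Max (Xs ! l) < Min (Xs ! Suc l))"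

text \<open>large_aux e X  means  X is omega^(e+1)-large.\<close>

primrec large_aux :: "nat \<Rightarrow> nat set \<Rightarrow> bool" where
  "large_aux 0 X \<longleftrightarrow> finite X \<and> X \<noteq> {} \<and> card X > Min X"
| "large_aux (Suc e) X \<longleftrightarrow> finite X \<and> X \<noteq> {} \<and>
     (\<exists>Xs. is_stack Xs \<and> length Xs = Min X \<and> (\<forall>Y\<in>set Xs. large_aux e Y) \<and>
           X - {Min X} = \<Union>(set Xs))"

definition omega_pow_large :: "nat \<Rightarrow> nat set \<Rightarrow> bool" where
  "omega_pow_large d X \<longleftrightarrow> d \<ge> 1 \<and> large_aux (d - 1) X"

definition omega_mult_large :: "nat \<Rightarrow> nat \<Rightarrow> nat set \<Rightarrow> bool" where
  "omega_mult_large d n X \<longleftrightarrow>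
     (\<exists>Xs. is_stack Xs \<and> length Xs = n \<and> (\<forall>Y\<in>set Xs. omega_pow_large d Y) \<and>
           X = \<Union>(set Xs))"

text \<open>(omega^d * m, k, i)-persistence. Colourings C : T \<inter> 2^(max X) \<rightarrow> k are modelled
  as functions on strings whose values on T \<inter> 2^(max X) are below k.\<close>

primrec persistent :: "nat \<Rightarrow> nat \<Rightarrow> nat \<Rightarrow> nat \<Rightarrow> nat set \<Rightarrow> bool" where
  "persistent d m k 0 X \<longleftrightarrow> finite X \<and> X \<noteq> {} \<and> omega_mult_large d m X"
| "persistent d m k (Suc i) X \<longleftrightarrow> finite X \<and> X \<noteq> {} \<and>
     (\<exists>Y. Y \<subseteq> X \<and> persistent d m k i Y \<and>
        (\<forall>T (C :: bool list \<Rightarrow> nat).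
            quasistrong X T \<and> (\<forall>\<sigma>\<in>T. length \<sigma> = Max X \<longrightarrow> C \<sigma> < k) \<longrightarrow>
            (\<exists>c<k. \<exists>S. S \<subseteq> T \<and> quasistrong Y S \<and>
               (\<forall>\<rho>\<in>leaves S. \<exists>\<tau>\<in>T. length \<tau> = Max X \<and> prefix \<rho> \<tau> \<and> C \<tau> = c))))"

end

theory Submission
  imports Defs
begin

text \<open>In the step, every block X_l has an (alpha,k,i)-persistent
  witness Y_l for the colouring property. The witnesses of the 2^i(n-1)+1 even-indexed blocks form
  a stack, whose union is (alpha n,k,i)-persistent by induction, and this union is a witness for
  the union of all blocks by repeated gluing: if Y witnesses X, Y_G witnesses G with |Y_G| >= 2 and
  Y_B witnesses B, where X < G < B, then Y \<union> Y_B witnesses X \<union> G \<union> B. To see this, colour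
  each node at level max G by the colour of a homogeneous Y_B-subtree above it; homogeneity for G
  gives, above every node at level max X, two incomparable such nodes of a common colour, which
  becomes the colour of that node. A homogeneous Y-subtree for the latter colouring, with every top
  node extended by its two nodes and their Y_B-subtrees, is a homogeneous (Y \<union> Y_B)-subtree.\<close>

section \<open>Quasistrong trees\<close>

lemma prefix_imp_take_eq: "prefix \<sigma> \<tau> \<Longrightarrow> take (length \<sigma>) \<tau> = \<sigma>"
  by (auto simp: prefix_def)

lemma prefix_same_length_eq: "prefix \<sigma> \<tau> \<Longrightarrow> length \<sigma> = length \<tau> \<Longrightarrow> \<sigma> = \<tau>"
  by (metis prefix_imp_take_eq take_all order_refl)

lemma take_prefix_take: "z \<le> z' \<Longrightarrow> prefix (take z f) (take z' f)"
  by (metis min.absorb1 take_is_prefix take_take)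

lemma take_eq_take_mono: "take z' f = take z' g \<Longrightarrow> z \<le> z' \<Longrightarrow> take z f = take z g"
  by (metis min.absorb1 take_take)

lemma leaf_above:
  assumes "finite S" "\<sigma> \<in> S"
  obtains l where "l \<in> leaves S" "prefix \<sigma> l"
proof -
  obtain l where "l \<in> S" "prefix \<sigma> l" "\<forall>\<tau>\<in>S. prefix l \<tau> \<longrightarrow> l = \<tau>"
    using prefix_order.finite_has_maximal2[OF assms] by blast
  then have "l \<in> leaves S" "prefix \<sigma> l"
    unfolding leaves_def by (auto simp: prefix_order.less_le)
  then show thesis by (rule that)
qed

lemma quasistrongD:
  assumes "quasistrong U T"
  shows "finite U" "U \<noteq> {}" "finite T" "is_tree T" "x \<in> U \<Longrightarrow> \<exists>\<sigma>\<in>T. length \<sigma> = x"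
  using assms unfolding quasistrong_def by simp_all

lemma quasistrong_branch:
  assumes "quasistrong U T" "x \<in> U" "x' \<in> U" "x < x'" "\<forall>w\<in>U. \<not> (x < w \<and> w < x')"
    "\<sigma> \<in> T" "length \<sigma> = x"
  shows "\<exists>\<tau>1 \<tau>2. {\<tau>\<in>T. length \<tau> = x' \<and> prefix \<sigma> \<tau>} = {\<tau>1, \<tau>2} \<and> \<not> prefix \<tau>1 \<tau>2 \<and> \<not> prefix \<tau>2 \<tau>1"
proof -
  have "\<forall>x\<in>U. \<forall>x'\<in>U. x < x' \<and> (\<forall>z\<in>U. \<not> (x < z \<and> z < x')) \<longrightarrow>
        (\<forall>\<sigma>\<in>T. length \<sigma> = x \<longrightarrow>
           (\<exists>\<tau>1 \<tau>2. {\<tau>\<in>T. length \<tau> = x' \<and> prefix \<sigma> \<tau>} = {\<tau>1, \<tau>2} \<and>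
                     \<not> prefix \<tau>1 \<tau>2 \<and> \<not> prefix \<tau>2 \<tau>1))"
    using assms(1) unfolding quasistrong_def by (elim conjE)
  from this[rule_format, OF assms(2,3) conjI[OF assms(4,5)] assms(6,7)] show ?thesis .
qed

lemma quasistrong_extend:
  assumes qU: "quasistrong U T" and \<sigma>: "\<sigma> \<in> T" "length \<sigma> \<in> U"
  shows "u \<in> U \<Longrightarrow> length \<sigma> \<le> u \<Longrightarrow> \<exists>\<tau>\<in>T. length \<tau> = u \<and> prefix \<sigma> \<tau>"
proof (induction u rule: less_induct)
  case (less u)
  show ?case
  proof (cases "u = length \<sigma>")
    case True then show ?thesis using \<sigma> by auto
  next
    case False
    let ?W = "{w\<in>U. w < u}"
    have finW: "finite ?W" and ne: "length \<sigma> \<in> ?W"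
      using quasistrongD(1)[OF qU] False less.prems \<sigma>(2) by auto
    define u' where "u' = Max ?W"
    have "u' \<in> ?W" unfolding u'_def using Max_in[OF finW] ne by blast
    then have u': "u' \<in> U" "u' < u" "length \<sigma> \<le> u'"
      unfolding u'_def using Max_ge[OF finW ne] by auto
    have next_u: "\<forall>w\<in>U. \<not> (u' < w \<and> w < u)"
      using Max_ge[OF finW] unfolding u'_def by (metis (no_types, lifting) mem_Collect_eq not_le)
    obtain \<tau>' where \<tau>': "\<tau>' \<in> T" "length \<tau>' = u'" "prefix \<sigma> \<tau>'"
      using less.IH[of u'] u' by blast
    obtain a b where "{\<tau>\<in>T. length \<tau> = u \<and> prefix \<tau>' \<tau>} = {a, b}"
      using quasistrong_branch[OF qU u'(1) less.prems(1) u'(2) next_u \<tau>'(1,2)] by blast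
    then have "a \<in> T" "length a = u" "prefix \<tau>' a" by auto
    then show ?thesis using \<tau>' prefix_order.trans by blast
  qed
qed

lemma quasistrong_convex:
  assumes qU: "quasistrong U T" and "X \<subseteq> U" "X \<noteq> {}"
    and convex: "\<And>u. u \<in> U \<Longrightarrow> Min X \<le> u \<Longrightarrow> u \<le> Max X \<Longrightarrow> u \<in> X"
  shows "quasistrong X T"
  unfolding quasistrong_def
proof (intro conjI ballI impI allI)
  show fX: "finite X" using quasistrongD(1)[OF qU] \<open>X \<subseteq> U\<close> finite_subset by blast
  fix x x' \<sigma> assume x: "x \<in> X" "x' \<in> X" and next_x: "x < x' \<and> (\<forall>w\<in>X. \<not> (x < w \<and> w < x'))"
    and \<sigma>: "\<sigma> \<in> T" "length \<sigma> = x"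
  have "w \<in> X" if "w \<in> U" "x \<le> w" "w \<le> x'" for w
    using that Min_le[OF fX x(1)] Max_ge[OF fX x(2)] by (intro convex) linarith+
  then have sep: "\<forall>w\<in>U. \<not> (x < w \<and> w < x')" using next_x by force
  have xU: "x \<in> U" "x' \<in> U" using x \<open>X \<subseteq> U\<close> by auto
  show "\<exists>\<tau>1 \<tau>2. {\<tau>\<in>T. length \<tau> = x' \<and> prefix \<sigma> \<tau>} = {\<tau>1, \<tau>2} \<and> \<not> prefix \<tau>1 \<tau>2 \<and> \<not> prefix \<tau>2 \<tau>1"
    using quasistrong_branch[OF qU xU conjunct1[OF next_x] sep \<sigma>] .
next
  fix x assume "x \<in> X"
  then show "\<exists>\<sigma>\<in>T. length \<sigma> = x" using quasistrongD(5)[OF qU] \<open>X \<subseteq> U\<close> by blast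
qed (use \<open>X \<noteq> {}\<close> quasistrongD(3,4)[OF qU] in simp_all)

definition cone :: "bool list set \<Rightarrow> bool list \<Rightarrow> bool list set" where
  "cone T \<pi> = {\<tau>\<in>T. prefix \<tau> \<pi> \<or> prefix \<pi> \<tau>}"

lemma cone_subset: "cone T \<pi> \<subseteq> T"
  unfolding cone_def by auto

lemma prefix_if_in_cone: "\<tau> \<in> cone T \<pi> \<Longrightarrow> length \<pi> \<le> length \<tau> \<Longrightarrow> prefix \<pi> \<tau>"
  unfolding cone_def by (metis mem_Collect_eq prefix_length_le prefix_same_length_eq le_antisym)

lemma quasistrong_cone:
  assumes qU: "quasistrong U T" and qB: "quasistrong B T" and "B \<subseteq> U"
    and \<pi>: "\<pi> \<in> T" "length \<pi> \<in> U" "length \<pi> < Min B"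
  shows "quasistrong B (cone T \<pi>)"
proof -
  have fB: "finite B" "B \<noteq> {}" and tree: "is_tree T"
    using quasistrongD[OF qB] by auto
  have \<pi>_le: "length \<pi> \<le> b" if "b \<in> B" for b
    using that \<pi>(3) fB by (meson Min_le less_imp_le order.trans)
  show ?thesis
    unfolding quasistrong_def
  proof (intro conjI ballI impI allI)
    show "finite (cone T \<pi>)" using quasistrongD(3)[OF qB] cone_subset finite_subset by metis
    show "is_tree (cone T \<pi>)"
      using tree unfolding is_tree_def cone_def
      by (metis (mono_tags, lifting) mem_Collect_eq prefix_order.trans prefix_same_cases)
  next
    fix b assume "b \<in> B"
    then show "\<exists>\<sigma>\<in>cone T \<pi>. length \<sigma> = b"
      using quasistrong_extend[OF qU \<pi>(1,2)] \<pi>_le \<open>B \<subseteq> U\<close> unfolding cone_def by blast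
  next
    fix x x' \<sigma> assume x: "x \<in> B" "x' \<in> B" and next_x: "x < x' \<and> (\<forall>w\<in>B. \<not> (x < w \<and> w < x'))"
      and \<sigma>: "\<sigma> \<in> cone T \<pi>" "length \<sigma> = x"
    have "prefix \<pi> \<sigma>" using prefix_if_in_cone[OF \<sigma>(1)] \<pi>_le x \<sigma>(2) by blast
    then have eq: "{\<tau>\<in>cone T \<pi>. length \<tau> = x' \<and> prefix \<sigma> \<tau>} = {\<tau>\<in>T. length \<tau> = x' \<and> prefix \<sigma> \<tau>}"
      unfolding cone_def by (auto intro: prefix_order.trans)
    have "\<sigma> \<in> T" using \<sigma>(1) cone_subset by blast
    show "\<exists>\<tau>1 \<tau>2. {\<tau>\<in>cone T \<pi>. length \<tau> = x' \<and> prefix \<sigma> \<tau>} = {\<tau>1, \<tau>2} \<and> \<not> prefix \<tau>1 \<tau>2 \<and> \<not> prefix \<tau>2 \<tau>1"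
      unfolding eq using quasistrong_branch[OF qB x conjunct1[OF next_x] conjunct2[OF next_x] \<open>\<sigma> \<in> T\<close> \<sigma>(2)] .
  qed (simp_all add: fB)
qed

lemma incomparable_pairI:
  "A = {a, b} \<Longrightarrow> \<not> prefix a b \<Longrightarrow> \<not> prefix b a \<Longrightarrow> \<exists>a b. A = {a, b} \<and> \<not> prefix a b \<and> \<not> prefix b a"
  by blast

definition prefix_closure :: "bool list set \<Rightarrow> bool list set" where
  "prefix_closure F = {\<sigma>. \<exists>f\<in>F. prefix \<sigma> f}"

lemma prefix_closure_subset: "is_tree T \<Longrightarrow> F \<subseteq> T \<Longrightarrow> prefix_closure F \<subseteq> T"
  unfolding prefix_closure_def is_tree_def by blast

lemma prefix_closure_level:
  assumes len: "\<And>g. g \<in> F \<Longrightarrow> length g = L" and "f \<in> F" "z \<le> z'" "z' \<le> L"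
  shows "{\<tau>\<in>prefix_closure F. length \<tau> = z' \<and> prefix (take z f) \<tau>} = take z' ` {g\<in>F. take z g = take z f}"
proof (intro set_eqI iffI)
  fix \<tau> assume "\<tau> \<in> {\<tau>\<in>prefix_closure F. length \<tau> = z' \<and> prefix (take z f) \<tau>}"
  then obtain g where g: "g \<in> F" "prefix \<tau> g" and \<tau>: "length \<tau> = z'" "prefix (take z f) \<tau>"
    unfolding prefix_closure_def by blast
  have "\<tau> = take z' g" using prefix_imp_take_eq[OF g(2)] \<tau>(1) by simp
  moreover have "take z \<tau> = take z f"
    using prefix_imp_take_eq[OF \<tau>(2)] assms by simp
  ultimately show "\<tau> \<in> take z' ` {g\<in>F. take z g = take z f}"
    using g(1) \<open>z \<le> z'\<close> by (auto simp: min_absorb1)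
next
  fix \<tau> assume "\<tau> \<in> take z' ` {g\<in>F. take z g = take z f}"
  then obtain g where g: "g \<in> F" "take z g = take z f" and \<tau>: "\<tau> = take z' g" by blast
  then show "\<tau> \<in> {\<tau>\<in>prefix_closure F. length \<tau> = z' \<and> prefix (take z f) \<tau>}"
    using len \<open>z' \<le> L\<close> take_prefix_take[OF \<open>z \<le> z'\<close>, of g]
    unfolding prefix_closure_def by (auto intro: take_is_prefix)
qed

section \<open>Top levels of quasistrong trees\<close>

text \<open>On the levels in Z, a Z-quasistrong tree is the prefix closure of its top level (the nodes
  of length Max Z), so it suffices to work with top levels; the branching condition then speaks
  about the truncations take z.\<close>

definition quasistrong_frontier :: "nat set \<Rightarrow> bool list set \<Rightarrow> bool" where
  "quasistrong_frontier Z F \<longleftrightarrow> finite Z \<and> Z \<noteq> {} \<and> finite F \<and> F \<noteq> {} \<and>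
     (\<forall>f\<in>F. length f = Max Z) \<and>
     (\<forall>z\<in>Z. \<forall>z'\<in>Z. z < z' \<and> (\<forall>w\<in>Z. \<not> (z < w \<and> w < z')) \<longrightarrow>
       (\<forall>f\<in>F. \<exists>a b. take z' ` {g\<in>F. take z g = take z f} = {a, b} \<and>
                     \<not> prefix a b \<and> \<not> prefix b a))"

lemma quasistrong_frontierD:
  assumes "quasistrong_frontier Z F"
  shows "finite Z" "Z \<noteq> {}" "finite F" "F \<noteq> {}" "f \<in> F \<Longrightarrow> length f = Max Z"
  using assms unfolding quasistrong_frontier_def by simp_all

lemma quasistrong_frontier_branch:
  assumes "quasistrong_frontier Z F" "z \<in> Z" "z' \<in> Z" "z < z'" "\<forall>w\<in>Z. \<not> (z < w \<and> w < z')" "f \<in> F"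
  shows "\<exists>a b. take z' ` {g\<in>F. take z g = take z f} = {a, b} \<and> \<not> prefix a b \<and> \<not> prefix b a"
proof -
  have "\<forall>z\<in>Z. \<forall>z'\<in>Z. z < z' \<and> (\<forall>w\<in>Z. \<not> (z < w \<and> w < z')) \<longrightarrow>
       (\<forall>f\<in>F. \<exists>a b. take z' ` {g\<in>F. take z g = take z f} = {a, b} \<and> \<not> prefix a b \<and> \<not> prefix b a)"
    using assms(1) unfolding quasistrong_frontier_def by (elim conjE)
  from this[rule_format, OF assms(2,3) conjI[OF assms(4,5)] assms(6)] show ?thesis .
qed

lemma quasistrong_prefix_closure:
  assumes qF: "quasistrong_frontier Z F"
  shows "quasistrong Z (prefix_closure F)"
  unfolding quasistrong_def
proof (intro conjI ballI impI allI)
  have "prefix_closure F = (\<Union>f\<in>F. set (prefixes f))" unfolding prefix_closure_def by auto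
  then show "finite (prefix_closure F)" using quasistrong_frontierD(3)[OF qF] by simp
  show "is_tree (prefix_closure F)"
    unfolding is_tree_def prefix_closure_def using prefix_order.trans by blast
next
  fix z assume "z \<in> Z"
  then have "z \<le> Max Z" using quasistrong_frontierD(1)[OF qF] by simp
  obtain f where "f \<in> F" using quasistrong_frontierD(4)[OF qF] by blast
  have "take z f \<in> prefix_closure F"
    unfolding prefix_closure_def using \<open>f \<in> F\<close> take_is_prefix by blast
  moreover have "length (take z f) = z"
    using \<open>z \<le> Max Z\<close> quasistrong_frontierD(5)[OF qF \<open>f \<in> F\<close>] by simp
  ultimately show "\<exists>\<sigma>\<in>prefix_closure F. length \<sigma> = z" by metis
next
  fix z z' \<sigma> assume z: "z \<in> Z" "z' \<in> Z" and next_z: "z < z' \<and> (\<forall>w\<in>Z. \<not> (z < w \<and> w < z'))"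
    and \<sigma>: "\<sigma> \<in> prefix_closure F" "length \<sigma> = z"
  obtain g where g: "g \<in> F" "prefix \<sigma> g" using \<sigma>(1) unfolding prefix_closure_def by blast
  then have f: "g \<in> F" "\<sigma> = take z g" using prefix_imp_take_eq[OF g(2)] \<sigma>(2) by simp_all
  have "z' \<le> Max Z" using z quasistrong_frontierD(1)[OF qF] by simp
  then have "{\<tau>\<in>prefix_closure F. length \<tau> = z' \<and> prefix \<sigma> \<tau>} = take z' ` {h\<in>F. take z h = take z g}"
    unfolding f(2) using prefix_closure_level[OF quasistrong_frontierD(5)[OF qF] g(1)] next_z by simp
  then show "\<exists>\<tau>1 \<tau>2. {\<tau>\<in>prefix_closure F. length \<tau> = z' \<and> prefix \<sigma> \<tau>} = {\<tau>1, \<tau>2} \<and>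
      \<not> prefix \<tau>1 \<tau>2 \<and> \<not> prefix \<tau>2 \<tau>1"
    using quasistrong_frontier_branch[OF qF z conjunct1[OF next_z] conjunct2[OF next_z] g(1)] by simp
qed (use quasistrong_frontierD(1,2)[OF qF] in simp_all)

lemma quasistrong_level_in_prefix_closure:
  assumes qS: "quasistrong Z S" and "\<tau> \<in> S" "length \<tau> \<in> Z"
  shows "\<tau> \<in> prefix_closure {\<sigma>\<in>S. length \<sigma> = Max Z}"
  using quasistrong_extend[OF qS assms(2,3), of "Max Z"] quasistrongD(1,2)[OF qS] assms(3)
  unfolding prefix_closure_def by auto

lemma quasistrong_top_level:
  assumes qS: "quasistrong Z S"
  shows "quasistrong_frontier Z {\<sigma>\<in>S. length \<sigma> = Max Z}" (is "quasistrong_frontier Z ?F")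
  unfolding quasistrong_frontier_def
proof (intro conjI ballI impI)
  show "finite ?F" using quasistrongD(3)[OF qS] by simp
  show "?F \<noteq> {}" using quasistrongD(5)[OF qS Max_in[OF quasistrongD(1,2)[OF qS]]] by auto
next
  fix z z' f assume z: "z \<in> Z" "z' \<in> Z" and next_z: "z < z' \<and> (\<forall>w\<in>Z. \<not> (z < w \<and> w < z'))"
    and f: "f \<in> ?F"
  have z'_le: "z' \<le> Max Z" using z quasistrongD(1)[OF qS] by simp
  have tree: "is_tree S" using quasistrongD(4)[OF qS] .
  have "take z f \<in> S" "length (take z f) = z"
    using f tree z'_le next_z take_is_prefix unfolding is_tree_def by auto
  from quasistrong_branch[OF qS z conjunct1[OF next_z] conjunct2[OF next_z] this]
  obtain a b where ab: "{\<tau>\<in>S. length \<tau> = z' \<and> prefix (take z f) \<tau>} = {a, b}" "\<not> prefix a b" "\<not> prefix b a"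
    by blast
  have "{\<tau>\<in>S. length \<tau> = z' \<and> prefix (take z f) \<tau>} =
      {\<tau>\<in>prefix_closure ?F. length \<tau> = z' \<and> prefix (take z f) \<tau>}"
    using z(2) prefix_closure_subset[OF tree, of ?F]
    by (auto intro: quasistrong_level_in_prefix_closure[OF qS])
  also have "\<dots> = take z' ` {g\<in>?F. take z g = take z f}"
    using prefix_closure_level[of ?F "Max Z" f z z'] f z'_le next_z by simp
  finally have "take z' ` {g\<in>?F. take z g = take z f} = {a, b}" using ab(1) by simp
  from incomparable_pairI[OF this ab(2,3)]
  show "\<exists>a b. take z' ` {g\<in>?F. take z g = take z f} = {a, b} \<and> \<not> prefix a b \<and> \<not> prefix b a" .
qed (use quasistrongD(1,2)[OF qS] in simp_all)

lemma quasistrong_frontier_restrict_root: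
  assumes qF: "quasistrong_frontier Z F" and "f0 \<in> F"
  shows "quasistrong_frontier Z {f\<in>F. take (Min Z) f = take (Min Z) f0}" (is "quasistrong_frontier Z ?F")
  unfolding quasistrong_frontier_def
proof (intro conjI ballI impI)
  fix z z' f assume z: "z \<in> Z" "z' \<in> Z" and next_z: "z < z' \<and> (\<forall>w\<in>Z. \<not> (z < w \<and> w < z'))"
    and f: "f \<in> ?F"
  have "Min Z \<le> z" using z quasistrong_frontierD(1)[OF qF] by simp
  then have "{g\<in>?F. take z g = take z f} = {g\<in>F. take z g = take z f}"
    using f by (auto dest: take_eq_take_mono[OF _ \<open>Min Z \<le> z\<close>])
  then show "\<exists>a b. take z' ` {g\<in>?F. take z g = take z f} = {a, b} \<and> \<not> prefix a b \<and> \<not> prefix b a"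
    using quasistrong_frontier_branch[OF qF z conjunct1[OF next_z] conjunct2[OF next_z]] f by simp
qed (use quasistrong_frontierD[OF qF] \<open>f0 \<in> F\<close> in \<open>simp_all, blast\<close>)

lemma not_prefix_same_length: "length a = length b \<Longrightarrow> a \<noteq> b \<Longrightarrow> \<not> prefix a b"
  using prefix_same_length_eq by blast

lemma take_fibre_of_take_image:
  assumes "z \<le> N" "z' \<le> N"
  shows "take z' ` {g\<in>F. take z g = take z f} = take z' ` {\<mu>\<in>take N ` F. take z \<mu> = take z (take N f)}"
proof -
  have "{\<mu>\<in>take N ` F. take z \<mu> = take z (take N f)} = take N ` {g\<in>F. take z g = take z f}"
    using assms(1) by (auto simp: min_absorb1)
  then show ?thesis using assms by (simp add: image_image min_absorb1)
qed

lemma quasistrong_frontier_graft: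
  assumes base: "quasistrong_frontier Y (take (Max Y) ` F)"
    and fin: "finite F" "finite YB" "YB \<noteq> {}"
    and below: "\<forall>y\<in>Y. \<forall>b\<in>YB. y < b"
    and len: "\<And>f. f \<in> F \<Longrightarrow> length f = Max YB"
    and split: "\<And>f. f \<in> F \<Longrightarrow> card (take (Min YB) ` {g\<in>F. take (Max Y) g = take (Max Y) f}) = 2"
    and fibre: "\<And>f. f \<in> F \<Longrightarrow> quasistrong_frontier YB {g\<in>F. take (Min YB) g = take (Min YB) f}"
  shows "quasistrong_frontier (Y \<union> YB) F"
proof -
  have fY: "finite Y" "Y \<noteq> {}" and "F \<noteq> {}"
    using quasistrong_frontierD(1,2,4)[OF base] by auto
  have maxY: "Max Y \<in> Y" and minYB: "Min YB \<in> YB" using fY fin by simp_all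
  have gap: "Max Y < Min YB" using below maxY minYB by blast
  have "Min YB \<le> Max YB" using fin by simp
  then have max_Un: "Max (Y \<union> YB) = Max YB" using gap fY fin by (simp add: Max_Un)
  show ?thesis
    unfolding quasistrong_frontier_def
  proof (intro conjI ballI impI)
    fix z z' f assume z: "z \<in> Y \<union> YB" "z' \<in> Y \<union> YB"
      and next_z: "z < z' \<and> (\<forall>w\<in>Y \<union> YB. \<not> (z < w \<and> w < z'))" and f: "f \<in> F"
    consider "z \<in> Y" "z' \<in> Y" | "z \<in> Y" "z' \<in> YB" | "z \<in> YB" "z' \<in> YB" | "z \<in> YB" "z' \<in> Y"
      using z by blast
    then show "\<exists>a b. take z' ` {g\<in>F. take z g = take z f} = {a, b} \<and> \<not> prefix a b \<and> \<not> prefix b a"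
    proof cases
      case 1
      then have "z \<le> Max Y" "z' \<le> Max Y" using fY by simp_all
      from take_fibre_of_take_image[OF this, of F f]
        quasistrong_frontier_branch[OF base 1 conjunct1[OF next_z] _ imageI[OF f]] next_z
      show ?thesis by simp
    next
      case 2
      then have "z = Max Y" "z' = Min YB"
        using next_z below maxY minYB fY fin by (metis Max_ge Min_le UnCI antisym_conv2)+
      then have "card (take z' ` {g\<in>F. take z g = take z f}) = 2" using split[OF f] by simp
      then obtain a b where ab: "take z' ` {g\<in>F. take z g = take z f} = {a, b}" "a \<noteq> b"
        by (auto simp: card_2_iff)
      have "length x = z'" if "x \<in> take z' ` {g\<in>F. take z g = take z f}" for x
        using that len \<open>z' = Min YB\<close> \<open>Min YB \<le> Max YB\<close> by auto
      then have "length a = z'" "length b = z'" using ab(1) by auto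
      then show ?thesis using incomparable_pairI[OF ab(1)] not_prefix_same_length ab(2) by metis
    next
      case 3
      then have "Min YB \<le> z" using fin by simp
      then have "{g\<in>F. take z g = take z f} = {g\<in>{h\<in>F. take (Min YB) h = take (Min YB) f}. take z g = take z f}"
        by (auto dest: take_eq_take_mono)
      then show ?thesis
        using quasistrong_frontier_branch[OF fibre[OF f] 3 conjunct1[OF next_z]] next_z f by simp
    next
      case 4
      then show ?thesis using below next_z by force
    qed
  qed (use fY fin \<open>F \<noteq> {}\<close> len max_Un in simp_all)
qed

definition rooted_frontier :: "nat set \<Rightarrow> bool list \<Rightarrow> bool list set \<Rightarrow> bool" where
  "rooted_frontier Z \<rho> F \<longleftrightarrow> quasistrong_frontier Z F \<and> (\<forall>f\<in>F. prefix \<rho> f) \<and>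
     (\<forall>f\<in>F. \<forall>g\<in>F. take (Min Z) f = take (Min Z) g)"

lemma rooted_frontierD:
  assumes "rooted_frontier Z \<rho> F"
  shows "quasistrong_frontier Z F" "f \<in> F \<Longrightarrow> prefix \<rho> f"
    "f \<in> F \<Longrightarrow> g \<in> F \<Longrightarrow> take (Min Z) f = take (Min Z) g"
  using assms unfolding rooted_frontier_def by blast+

lemma card_roots_of_rooted_frontiers:
  assumes rooted: "\<And>\<rho>. \<rho> \<in> R \<Longrightarrow> rooted_frontier Z \<rho> (FB \<rho>)"
    and len: "\<And>\<rho>. \<rho> \<in> R \<Longrightarrow> length \<rho> = N" and "N \<le> Min Z"
  shows "card (take (Min Z) ` (\<Union>\<rho>\<in>R. FB \<rho>)) = card R"
proof -
  let ?A = "take (Min Z) ` (\<Union>\<rho>\<in>R. FB \<rho>)"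
  have take_N: "take N g = \<rho>" if "\<rho> \<in> R" "g \<in> FB \<rho>" for \<rho> g
    using prefix_imp_take_eq[OF rooted_frontierD(2)[OF rooted[OF that(1)] that(2)]] len[OF that(1)]
    by simp
  have take_N_root: "take N (take (Min Z) g) = take N g" for g
    using \<open>N \<le> Min Z\<close> by (simp add: min_absorb2)
  have "inj_on (take N) ?A"
  proof (rule inj_onI)
    fix a a' assume "a \<in> ?A" "a' \<in> ?A" and eq: "take N a = take N a'"
    then obtain \<rho> \<rho>' g g' where g: "\<rho> \<in> R" "g \<in> FB \<rho>" "a = take (Min Z) g"
      and g': "\<rho>' \<in> R" "g' \<in> FB \<rho>'" "a' = take (Min Z) g'" by blast
    have "\<rho> = \<rho>'" using eq take_N[OF g(1,2)] take_N[OF g'(1,2)] take_N_root g(3) g'(3) by metis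
    then show "a = a'" using rooted_frontierD(3)[OF rooted[OF g(1)] g(2)] g'(2,3) g(3) by metis
  qed
  moreover have "take N ` ?A = R"
  proof (intro equalityI subsetI)
    fix \<rho> assume "\<rho> \<in> R"
    then obtain g where "g \<in> FB \<rho>"
      using quasistrong_frontierD(4)[OF rooted_frontierD(1)[OF rooted]] by blast
    then show "\<rho> \<in> take N ` ?A" using \<open>\<rho> \<in> R\<close> take_N take_N_root by (metis UN_I image_eqI)
  next
    fix x assume "x \<in> take N ` ?A"
    then obtain \<rho> g where "\<rho> \<in> R" "g \<in> FB \<rho>" "x = take N (take (Min Z) g)" by blast
    then show "x \<in> R" using take_N take_N_root by metis
  qed
  ultimately show ?thesis by (metis card_image)
qed

text \<open>Grafting: above each top node \<xi> of a Y-tree sit two nodes R \<xi> at level N, and above each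
  of these a single-rooted YB-frontier.\<close>

locale pair_graft =
  fixes Y YB :: "nat set" and N :: nat and F0 :: "bool list set"
    and R :: "bool list \<Rightarrow> bool list set" and FB :: "bool list \<Rightarrow> bool list \<Rightarrow> bool list set"
  assumes base: "quasistrong_frontier Y F0"
    and N: "Max Y \<le> N" "\<forall>b\<in>YB. N < b"
    and pair: "\<And>\<xi>. \<xi> \<in> F0 \<Longrightarrow> card (R \<xi>) = 2"
    and above: "\<And>\<xi> \<rho>. \<xi> \<in> F0 \<Longrightarrow> \<rho> \<in> R \<xi> \<Longrightarrow> length \<rho> = N \<and> prefix \<xi> \<rho>"
    and rooted: "\<And>\<xi> \<rho>. \<xi> \<in> F0 \<Longrightarrow> \<rho> \<in> R \<xi> \<Longrightarrow> rooted_frontier YB \<rho> (FB \<xi> \<rho>)"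
begin

abbreviation grafted :: "bool list set" where
  "grafted \<equiv> \<Union>\<xi>\<in>F0. \<Union>\<rho>\<in>R \<xi>. FB \<xi> \<rho>"

lemma R_finite_nonempty: "\<xi> \<in> F0 \<Longrightarrow> R \<xi> \<noteq> {} \<and> finite (R \<xi>)"
  using pair[of \<xi>] by (auto simp: card_2_iff)

lemma FB_finite_nonempty:
  assumes "\<xi> \<in> F0" "\<rho> \<in> R \<xi>"
  shows "finite (FB \<xi> \<rho>)" "FB \<xi> \<rho> \<noteq> {}" "f \<in> FB \<xi> \<rho> \<Longrightarrow> length f = Max YB"
  using quasistrong_frontierD(3-5)[OF rooted_frontierD(1)[OF rooted[OF assms]]] by simp_all

lemma YB_finite_nonempty: "finite YB \<and> YB \<noteq> {}"
proof -
  obtain \<xi> \<rho> where "\<xi> \<in> F0" "\<rho> \<in> R \<xi>"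
    using quasistrong_frontierD(4)[OF base] R_finite_nonempty by blast
  then show ?thesis using quasistrong_frontierD(1,2)[OF rooted_frontierD(1)[OF rooted]] by simp
qed

lemma N_less_Min: "N < Min YB"
  using N(2) YB_finite_nonempty by simp

lemma take_grafted:
  assumes "\<xi> \<in> F0" "\<rho> \<in> R \<xi>" "g \<in> FB \<xi> \<rho>"
  shows "take N g = \<rho>" "take (Max Y) g = \<xi>"
proof -
  have "prefix \<rho> g" "length \<rho> = N" "prefix \<xi> \<rho>"
    using rooted_frontierD(2)[OF rooted[OF assms(1,2)] assms(3)] above[OF assms(1,2)] by simp_all
  moreover have "length \<xi> = Max Y" using quasistrong_frontierD(5)[OF base assms(1)] .
  ultimately show "take N g = \<rho>" "take (Max Y) g = \<xi>"
    using prefix_imp_take_eq prefix_order.trans by metis+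
qed

lemma take_Max_grafted: "take (Max Y) ` grafted = F0"
proof (intro equalityI subsetI)
  fix \<xi> assume "\<xi> \<in> F0"
  with R_finite_nonempty FB_finite_nonempty(2) obtain \<rho> g where "\<rho> \<in> R \<xi>" "g \<in> FB \<xi> \<rho>" by blast
  then show "\<xi> \<in> take (Max Y) ` grafted" using \<open>\<xi> \<in> F0\<close> take_grafted by (metis UN_I image_eqI)
qed (use take_grafted in auto)

lemma grafted_split:
  assumes "f \<in> grafted"
  shows "card (take (Min YB) ` {g\<in>grafted. take (Max Y) g = take (Max Y) f}) = 2"
proof -
  obtain \<xi> \<rho> where f: "\<xi> \<in> F0" "\<rho> \<in> R \<xi>" "f \<in> FB \<xi> \<rho>" using assms by blast
  have "{g\<in>grafted. take (Max Y) g = take (Max Y) f} = (\<Union>\<rho>'\<in>R \<xi>. FB \<xi> \<rho>')"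
    using take_grafted f by auto
  then show ?thesis
    using card_roots_of_rooted_frontiers[of "R \<xi>" YB "FB \<xi>" N] rooted[OF f(1)] above[OF f(1)]
      pair[OF f(1)] N_less_Min by simp
qed

lemma grafted_fibre:
  assumes "f \<in> grafted"
  shows "quasistrong_frontier YB {g\<in>grafted. take (Min YB) g = take (Min YB) f}"
proof -
  obtain \<xi> \<rho> where f: "\<xi> \<in> F0" "\<rho> \<in> R \<xi>" "f \<in> FB \<xi> \<rho>" using assms by blast
  have "{g\<in>grafted. take (Min YB) g = take (Min YB) f} = FB \<xi> \<rho>"
  proof (intro equalityI subsetI)
    fix g assume "g \<in> {g\<in>grafted. take (Min YB) g = take (Min YB) f}"
    then obtain \<xi>' \<rho>' where g: "\<xi>' \<in> F0" "\<rho>' \<in> R \<xi>'" "g \<in> FB \<xi>' \<rho>'"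
      and root: "take (Min YB) g = take (Min YB) f" by blast
    have "N \<le> Min YB" "Max Y \<le> Min YB" using N_less_Min N(1) by simp_all
    then have "take N g = take N f" "take (Max Y) g = take (Max Y) f"
      using take_eq_take_mono[OF root] by blast+
    then have "\<rho>' = \<rho>" "\<xi>' = \<xi>" using take_grafted[OF g] take_grafted[OF f] by metis+
    then show "g \<in> FB \<xi> \<rho>" using g(3) by simp
  next
    fix g assume "g \<in> FB \<xi> \<rho>"
    then show "g \<in> {g\<in>grafted. take (Min YB) g = take (Min YB) f}"
      using f rooted_frontierD(3)[OF rooted[OF f(1,2)] _ f(3)] by blast
  qed
  then show ?thesis using rooted_frontierD(1)[OF rooted[OF f(1,2)]] by simp
qed

lemma quasistrong_frontier_grafted: "quasistrong_frontier (Y \<union> YB) grafted"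
proof (rule quasistrong_frontier_graft)
  show "quasistrong_frontier Y (take (Max Y) ` grafted)" using base take_Max_grafted by simp
  show "finite grafted" using quasistrong_frontierD(3)[OF base] R_finite_nonempty FB_finite_nonempty(1) by blast
  show "\<forall>y\<in>Y. \<forall>b\<in>YB. y < b"
    using Max_ge[OF quasistrong_frontierD(1)[OF base]] N by (meson le_less_trans order.trans)
qed (use YB_finite_nonempty FB_finite_nonempty(3) grafted_split grafted_fibre in auto)

end

section \<open>Homogeneous witnesses\<close>

definition homogeneous_witness :: "nat \<Rightarrow> nat set \<Rightarrow> nat set \<Rightarrow> bool" where
  "homogeneous_witness k X Y \<longleftrightarrow>
     (\<forall>T (C :: bool list \<Rightarrow> nat). quasistrong X T \<and> (\<forall>\<sigma>\<in>T. length \<sigma> = Max X \<longrightarrow> C \<sigma> < k) \<longrightarrow>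
       (\<exists>c<k. \<exists>S. S \<subseteq> T \<and> quasistrong Y S \<and>
          (\<forall>\<rho>\<in>leaves S. \<exists>\<tau>\<in>T. length \<tau> = Max X \<and> prefix \<rho> \<tau> \<and> C \<tau> = c)))"

lemma persistent_Suc_iff:
  "persistent d m k (Suc i) X \<longleftrightarrow>
     finite X \<and> X \<noteq> {} \<and> (\<exists>Y\<subseteq>X. persistent d m k i Y \<and> homogeneous_witness k X Y)"
  by (simp add: homogeneous_witness_def)

lemma homogeneous_witnessE:
  assumes "homogeneous_witness k X Y" "quasistrong X T" "\<forall>\<sigma>\<in>T. length \<sigma> = Max X \<longrightarrow> C \<sigma> < k"
  obtains c S where "c < k" "S \<subseteq> T" "quasistrong Y S"
    "\<forall>\<rho>\<in>S. \<exists>\<tau>\<in>T. length \<tau> = Max X \<and> prefix \<rho> \<tau> \<and> C \<tau> = c"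
proof -
  from assms(1)[unfolded homogeneous_witness_def, rule_format, OF conjI[OF assms(2,3)]]
  obtain c S where cS: "c < k" "S \<subseteq> T" "quasistrong Y S"
    and leaves: "\<forall>\<rho>\<in>leaves S. \<exists>\<tau>\<in>T. length \<tau> = Max X \<and> prefix \<rho> \<tau> \<and> C \<tau> = c"
    by blast
  have "\<exists>\<tau>\<in>T. length \<tau> = Max X \<and> prefix \<rho> \<tau> \<and> C \<tau> = c" if "\<rho> \<in> S" for \<rho>
  proof -
    obtain l where "l \<in> leaves S" "prefix \<rho> l"
      using leaf_above[OF quasistrongD(3)[OF cS(3)] \<open>\<rho> \<in> S\<close>] by blast
    then show ?thesis using leaves prefix_order.trans by blast
  qed
  then show thesis using that cS by blast
qed

lemma homogeneous_subtree_of_frontier: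
  assumes "is_tree T" "F \<subseteq> T" "quasistrong_frontier Z F"
    and colour: "\<forall>f\<in>F. \<exists>\<tau>\<in>T. length \<tau> = L \<and> prefix f \<tau> \<and> C \<tau> = c"
  shows "\<exists>S. S \<subseteq> T \<and> quasistrong Z S \<and> (\<forall>\<rho>\<in>leaves S. \<exists>\<tau>\<in>T. length \<tau> = L \<and> prefix \<rho> \<tau> \<and> C \<tau> = c)"
proof (intro exI conjI)
  show "prefix_closure F \<subseteq> T" using prefix_closure_subset assms(1,2) .
  show "quasistrong Z (prefix_closure F)" using quasistrong_prefix_closure assms(3) .
  show "\<forall>\<rho>\<in>leaves (prefix_closure F). \<exists>\<tau>\<in>T. length \<tau> = L \<and> prefix \<rho> \<tau> \<and> C \<tau> = c"
    using colour prefix_order.trans unfolding leaves_def prefix_closure_def by blast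
qed

lemma quasistrong_incomparable_pair:
  assumes qS: "quasistrong Y S" and "2 \<le> card Y"
  obtains a b where "a \<in> S" "b \<in> S" "\<not> prefix a b" "\<not> prefix b a"
proof -
  have fY: "finite Y" "Y \<noteq> {}" using quasistrongD(1,2)[OF qS] by simp_all
  define y0 where "y0 = Min Y"
  have y0: "y0 \<in> Y" unfolding y0_def using fY by simp
  have ne: "Y - {y0} \<noteq> {}"
  proof
    assume "Y - {y0} = {}"
    then have "card Y \<le> card {y0}" using card_mono[of "{y0}" Y] by blast
    then show False using \<open>2 \<le> card Y\<close> by simp
  qed
  define y1 where "y1 = Min (Y - {y0})"
  have "y1 \<in> Y - {y0}" unfolding y1_def using Min_in[OF _ ne] fY by blast
  then have y1: "y1 \<in> Y" "y0 < y1"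
    using Min_le[OF fY(1)] unfolding y0_def by (auto simp: order.not_eq_order_implies_strict)
  have next_y: "\<forall>w\<in>Y. \<not> (y0 < w \<and> w < y1)"
    using Min_le[of "Y - {y0}"] fY(1) unfolding y1_def by fastforce
  obtain \<sigma> where "\<sigma> \<in> S" "length \<sigma> = y0" using quasistrongD(5)[OF qS y0] by blast
  from quasistrong_branch[OF qS y0 y1 next_y this]
  obtain a b where "{\<tau>\<in>S. length \<tau> = y1 \<and> prefix \<sigma> \<tau>} = {a, b}" "\<not> prefix a b" "\<not> prefix b a"
    by blast
  then show thesis using that by blast
qed

lemma homogeneous_rooted_frontier_in_cone:
  assumes qU: "quasistrong U T" and qB: "quasistrong B T" and "B \<subseteq> U" "Max B = Max U"
    and C: "\<forall>\<sigma>\<in>T. length \<sigma> = Max U \<longrightarrow> C \<sigma> < k"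
    and wB: "homogeneous_witness k B YB" "YB \<subseteq> B"
    and \<rho>: "\<rho> \<in> T" "length \<rho> \<in> U" "length \<rho> < Min B"
  shows "\<exists>c F. c < k \<and> F \<subseteq> T \<and> rooted_frontier YB \<rho> F \<and>
    (\<forall>f\<in>F. \<exists>\<tau>\<in>T. length \<tau> = Max B \<and> prefix f \<tau> \<and> C \<tau> = c)"
proof -
  have "\<forall>\<sigma>\<in>cone T \<rho>. length \<sigma> = Max B \<longrightarrow> C \<sigma> < k"
    using C cone_subset[of T \<rho>] \<open>Max B = Max U\<close> by auto
  from homogeneous_witnessE[OF wB(1) quasistrong_cone[OF qU qB \<open>B \<subseteq> U\<close> \<rho>] this]
  obtain c S where cS: "c < k" "S \<subseteq> cone T \<rho>" "quasistrong YB S"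
    and colour: "\<forall>\<sigma>\<in>S. \<exists>\<tau>\<in>cone T \<rho>. length \<tau> = Max B \<and> prefix \<sigma> \<tau> \<and> C \<tau> = c" .
  define F' where "F' = {\<sigma>\<in>S. length \<sigma> = Max YB}"
  have qF': "quasistrong_frontier YB F'" unfolding F'_def using quasistrong_top_level[OF cS(3)] .
  then obtain f0 where "f0 \<in> F'" using quasistrong_frontierD(4) by blast
  define F where "F = {f\<in>F'. take (Min YB) f = take (Min YB) f0}"
  have qF: "quasistrong_frontier YB F"
    unfolding F_def using quasistrong_frontier_restrict_root[OF qF' \<open>f0 \<in> F'\<close>] .
  have "Min B \<le> Max YB"
    using wB(2) quasistrongD(1,2)[OF cS(3)] quasistrongD(1)[OF qB] by (meson Max_in Min_le subsetD)
  then have "\<forall>f\<in>F. prefix \<rho> f"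
    using cS(2) \<rho>(3) prefix_if_in_cone unfolding F_def F'_def by fastforce
  then have rooted: "rooted_frontier YB \<rho> F"
    using qF unfolding rooted_frontier_def by (simp add: F_def)
  have "F \<subseteq> T" unfolding F_def F'_def using cS(2) cone_subset by blast
  have colour_F: "\<forall>f\<in>F. \<exists>\<tau>\<in>T. length \<tau> = Max B \<and> prefix f \<tau> \<and> C \<tau> = c"
  proof
    fix f assume "f \<in> F"
    then obtain \<tau> where "\<tau> \<in> cone T \<rho>" "length \<tau> = Max B \<and> prefix f \<tau> \<and> C \<tau> = c"
      using colour unfolding F_def F'_def by auto
    then show "\<exists>\<tau>\<in>T. length \<tau> = Max B \<and> prefix f \<tau> \<and> C \<tau> = c" using cone_subset by auto
  qed
  show ?thesis
  proof (intro exI conjI)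
    show "c < k" by (fact cS(1))
  qed fact+
qed

lemma homogeneous_split_in_cone:
  assumes qU: "quasistrong U T" and qG: "quasistrong G T" and qB: "quasistrong B T"
    and "G \<subseteq> U" "B \<subseteq> U" "Max G < Min B" "Max B = Max U"
    and C: "\<forall>\<sigma>\<in>T. length \<sigma> = Max U \<longrightarrow> C \<sigma> < k"
    and wG: "homogeneous_witness k G YG" "YG \<subseteq> G" "2 \<le> card YG"
    and wB: "homogeneous_witness k B YB" "YB \<subseteq> B"
    and \<pi>: "\<pi> \<in> T" "length \<pi> \<in> U" "length \<pi> < Min G"
  shows "\<exists>c R FB. c < k \<and> card R = 2 \<and>
    (\<forall>\<rho>\<in>R. \<rho> \<in> T \<and> length \<rho> = Max G \<and> prefix \<pi> \<rho> \<and> FB \<rho> \<subseteq> T \<and> rooted_frontier YB \<rho> (FB \<rho>) \<and>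
      (\<forall>f\<in>FB \<rho>. \<exists>\<tau>\<in>T. length \<tau> = Max B \<and> prefix f \<tau> \<and> C \<tau> = c))"
proof -
  have maxG: "Max G \<in> G" "Min G \<le> Max G" using quasistrongD(1,2)[OF qG] by simp_all
  have "\<forall>\<rho>\<in>{\<rho>\<in>T. length \<rho> = Max G}. \<exists>c F. c < k \<and> F \<subseteq> T \<and> rooted_frontier YB \<rho> F \<and>
      (\<forall>f\<in>F. \<exists>\<tau>\<in>T. length \<tau> = Max B \<and> prefix f \<tau> \<and> C \<tau> = c)"
    using homogeneous_rooted_frontier_in_cone[OF qU qB \<open>B \<subseteq> U\<close> \<open>Max B = Max U\<close> C wB] maxG(1) \<open>G \<subseteq> U\<close>
      \<open>Max G < Min B\<close> by auto
  from bchoice[OF this] obtain cB where "\<forall>\<rho>\<in>{\<rho>\<in>T. length \<rho> = Max G}. \<exists>F. cB \<rho> < k \<and>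
      F \<subseteq> T \<and> rooted_frontier YB \<rho> F \<and> (\<forall>f\<in>F. \<exists>\<tau>\<in>T. length \<tau> = Max B \<and> prefix f \<tau> \<and> C \<tau> = cB \<rho>)"
    by blast
  from bchoice[OF this] obtain FB where FB: "\<forall>\<rho>\<in>{\<rho>\<in>T. length \<rho> = Max G}. cB \<rho> < k \<and> FB \<rho> \<subseteq> T \<and>
      rooted_frontier YB \<rho> (FB \<rho>) \<and> (\<forall>f\<in>FB \<rho>. \<exists>\<tau>\<in>T. length \<tau> = Max B \<and> prefix f \<tau> \<and> C \<tau> = cB \<rho>)"
    by blast
  have "\<forall>\<rho>\<in>cone T \<pi>. length \<rho> = Max G \<longrightarrow> cB \<rho> < k" using FB cone_subset by blast
  from homogeneous_witnessE[OF wG(1) quasistrong_cone[OF qU qG \<open>G \<subseteq> U\<close> \<pi>] this]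
  obtain c S where cS: "c < k" "S \<subseteq> cone T \<pi>" "quasistrong YG S"
    and colour: "\<forall>\<sigma>\<in>S. \<exists>\<tau>\<in>cone T \<pi>. length \<tau> = Max G \<and> prefix \<sigma> \<tau> \<and> cB \<tau> = c" .
  obtain a b where "a \<in> S" "b \<in> S" and ab: "\<not> prefix a b" "\<not> prefix b a"
    using quasistrong_incomparable_pair[OF cS(3) wG(3)] .
  then obtain \<rho>1 \<rho>2 where \<rho>1: "\<rho>1 \<in> cone T \<pi>" "length \<rho>1 = Max G" "prefix a \<rho>1" "cB \<rho>1 = c"
    and \<rho>2: "\<rho>2 \<in> cone T \<pi>" "length \<rho>2 = Max G" "prefix b \<rho>2" "cB \<rho>2 = c"
    using colour by metis
  have "\<rho>1 \<noteq> \<rho>2" using ab \<rho>1(3) \<rho>2(3) prefix_same_cases by blast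
  then have "card {\<rho>1, \<rho>2} = 2" by simp
  moreover have "\<forall>\<rho>\<in>{\<rho>1, \<rho>2}. \<rho> \<in> T \<and> length \<rho> = Max G \<and> prefix \<pi> \<rho> \<and> FB \<rho> \<subseteq> T \<and>
      rooted_frontier YB \<rho> (FB \<rho>) \<and> (\<forall>f\<in>FB \<rho>. \<exists>\<tau>\<in>T. length \<tau> = Max B \<and> prefix f \<tau> \<and> C \<tau> = c)"
  proof
    fix \<rho> assume "\<rho> \<in> {\<rho>1, \<rho>2}"
    then have \<rho>: "\<rho> \<in> cone T \<pi>" "length \<rho> = Max G" "cB \<rho> = c" using \<rho>1 \<rho>2 by auto
    then have "\<rho> \<in> T" "prefix \<pi> \<rho>"
      using cone_subset prefix_if_in_cone \<pi>(3) maxG(2) by (blast, simp)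
    with \<rho> show "\<rho> \<in> T \<and> length \<rho> = Max G \<and> prefix \<pi> \<rho> \<and> FB \<rho> \<subseteq> T \<and>
      rooted_frontier YB \<rho> (FB \<rho>) \<and> (\<forall>f\<in>FB \<rho>. \<exists>\<tau>\<in>T. length \<tau> = Max B \<and> prefix f \<tau> \<and> C \<tau> = c)"
      using bspec[OF FB, of \<rho>] by simp
  qed
  ultimately show ?thesis
    using cS(1) by (intro exI[of _ c] exI[of _ "{\<rho>1, \<rho>2}"] exI[of _ FB] conjI)
qed

lemma quasistrong_middle_block:
  assumes qU: "quasistrong (L \<union> A \<union> H) T" and "finite A" "A \<noteq> {}"
    and "\<forall>l\<in>L. \<forall>a\<in>A. l < a" "\<forall>a\<in>A. \<forall>h\<in>H. a < h"
  shows "quasistrong A T"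
proof (rule quasistrong_convex[OF qU _ \<open>A \<noteq> {}\<close>])
  fix u assume "u \<in> L \<union> A \<union> H" "Min A \<le> u" "u \<le> Max A"
  moreover have "Min A \<in> A" "Max A \<in> A" using assms(2,3) by simp_all
  ultimately show "u \<in> A" using assms(4,5) by (meson UnE leD)
qed blast

lemma quasistrong_three_blocks:
  assumes qU: "quasistrong (X \<union> G \<union> B) T"
    and fin: "finite X" "finite G" "finite B" and ne: "X \<noteq> {}" "G \<noteq> {}" "B \<noteq> {}"
    and XG: "\<forall>x\<in>X. \<forall>g\<in>G. x < g" and GB: "\<forall>g\<in>G. \<forall>b\<in>B. g < b"
  shows "quasistrong X T" "quasistrong G T" "quasistrong B T" "Max (X \<union> G \<union> B) = Max B"
proof -
  have XB: "\<forall>x\<in>X. \<forall>b\<in>B. x < b" using XG GB ne(2) by (meson all_not_in_conv order.strict_trans)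
  show "quasistrong X T"
    using quasistrong_middle_block[of "{}" X "G \<union> B"] qU fin ne XG XB by (simp add: Un_assoc ball_Un)
  show "quasistrong G T"
    using quasistrong_middle_block[of X G B] qU fin ne XG GB by simp
  show "quasistrong B T"
    using quasistrong_middle_block[of "X \<union> G" B "{}"] qU fin ne XB GB by (simp add: ball_Un)
  have "Max X < Max G" "Max G < Max B" using XG GB fin ne by simp_all
  then show "Max (X \<union> G \<union> B) = Max B" using fin ne by (simp add: Max_Un)
qed

lemma homogeneous_subtree_of_splits:
  assumes qX: "quasistrong X T" and tree: "is_tree T"
    and wX: "homogeneous_witness k X Y" "Y \<subseteq> X"
    and "\<forall>x\<in>X. x < M" "\<forall>b\<in>YB. M < b"
    and splits: "\<forall>\<pi>\<in>{\<pi>\<in>T. length \<pi> = Max X}. cG \<pi> < k \<and> card (R \<pi>) = 2 \<and>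
      (\<forall>\<rho>\<in>R \<pi>. \<rho> \<in> T \<and> length \<rho> = M \<and> prefix \<pi> \<rho> \<and> FB \<pi> \<rho> \<subseteq> T \<and>
        rooted_frontier YB \<rho> (FB \<pi> \<rho>) \<and> (\<forall>f\<in>FB \<pi> \<rho>. \<exists>\<tau>\<in>T. length \<tau> = L \<and> prefix f \<tau> \<and> C \<tau> = cG \<pi>))"
  shows "\<exists>c<k. \<exists>S. S \<subseteq> T \<and> quasistrong (Y \<union> YB) S \<and>
    (\<forall>\<rho>\<in>leaves S. \<exists>\<tau>\<in>T. length \<tau> = L \<and> prefix \<rho> \<tau> \<and> C \<tau> = c)"
proof -
  have "\<forall>\<sigma>\<in>T. length \<sigma> = Max X \<longrightarrow> cG \<sigma> < k" using splits by blast
  from homogeneous_witnessE[OF wX(1) qX this]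
  obtain c S where cS: "c < k" "S \<subseteq> T" "quasistrong Y S"
    and colour: "\<forall>\<xi>\<in>S. \<exists>\<pi>\<in>T. length \<pi> = Max X \<and> prefix \<xi> \<pi> \<and> cG \<pi> = c" .
  define F0 where "F0 = {\<xi>\<in>S. length \<xi> = Max Y}"
  have "\<forall>\<xi>\<in>F0. \<exists>\<pi>. \<pi> \<in> T \<and> length \<pi> = Max X \<and> prefix \<xi> \<pi> \<and> cG \<pi> = c"
    using colour unfolding F0_def by auto
  from bchoice[OF this]
  obtain p where p: "\<forall>\<xi>\<in>F0. p \<xi> \<in> T \<and> length (p \<xi>) = Max X \<and> prefix \<xi> (p \<xi>) \<and> cG (p \<xi>) = c"
    by blast
  have split_p: "card (R (p \<xi>)) = 2"
    "\<rho> \<in> R (p \<xi>) \<Longrightarrow> length \<rho> = M \<and> prefix \<xi> \<rho> \<and> FB (p \<xi>) \<rho> \<subseteq> T \<and> rooted_frontier YB \<rho> (FB (p \<xi>) \<rho>)"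
    "\<rho> \<in> R (p \<xi>) \<Longrightarrow> f \<in> FB (p \<xi>) \<rho> \<Longrightarrow> \<exists>\<tau>\<in>T. length \<tau> = L \<and> prefix f \<tau> \<and> C \<tau> = c"
    if "\<xi> \<in> F0" for \<xi> \<rho> f
  proof -
    have "p \<xi> \<in> {\<pi>\<in>T. length \<pi> = Max X}" "prefix \<xi> (p \<xi>)" "cG (p \<xi>) = c" using p that by simp_all
    note split = bspec[OF splits this(1)]
    show "card (R (p \<xi>)) = 2" using split by simp
    show "\<rho> \<in> R (p \<xi>) \<Longrightarrow> length \<rho> = M \<and> prefix \<xi> \<rho> \<and> FB (p \<xi>) \<rho> \<subseteq> T \<and> rooted_frontier YB \<rho> (FB (p \<xi>) \<rho>)"
      using split \<open>prefix \<xi> (p \<xi>)\<close> by (auto intro: prefix_order.trans)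
    show "\<rho> \<in> R (p \<xi>) \<Longrightarrow> f \<in> FB (p \<xi>) \<rho> \<Longrightarrow> \<exists>\<tau>\<in>T. length \<tau> = L \<and> prefix f \<tau> \<and> C \<tau> = c"
      using split \<open>cG (p \<xi>) = c\<close> by auto
  qed
  let ?F = "\<Union>\<xi>\<in>F0. \<Union>\<rho>\<in>R (p \<xi>). FB (p \<xi>) \<rho>"
  have "pair_graft Y YB M F0 (\<lambda>\<xi>. R (p \<xi>)) (\<lambda>\<xi>. FB (p \<xi>))"
  proof
    show "quasistrong_frontier Y F0" unfolding F0_def using quasistrong_top_level[OF cS(3)] .
    have "Max Y \<in> X" using wX(2) Max_in[OF quasistrongD(1,2)[OF cS(3)]] by blast
    then show "Max Y \<le> M" using \<open>\<forall>x\<in>X. x < M\<close> by (simp add: less_imp_le)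
    show "\<forall>b\<in>YB. M < b" by fact
  qed (simp_all add: split_p)
  then have qF: "quasistrong_frontier (Y \<union> YB) ?F" by (rule pair_graft.quasistrong_frontier_grafted)
  have FT: "?F \<subseteq> T" using split_p(2) by blast
  have colour_F: "\<forall>f\<in>?F. \<exists>\<tau>\<in>T. length \<tau> = L \<and> prefix f \<tau> \<and> C \<tau> = c"
  proof
    fix f assume "f \<in> ?F"
    then obtain \<xi> \<rho> where "\<xi> \<in> F0" "\<rho> \<in> R (p \<xi>)" "f \<in> FB (p \<xi>) \<rho>" by blast
    then show "\<exists>\<tau>\<in>T. length \<tau> = L \<and> prefix f \<tau> \<and> C \<tau> = c" by (rule split_p(3))
  qed
  from homogeneous_subtree_of_frontier[OF tree FT qF colour_F]
  obtain S' where "S' \<subseteq> T" "quasistrong (Y \<union> YB) S'"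
    "\<forall>\<rho>\<in>leaves S'. \<exists>\<tau>\<in>T. length \<tau> = L \<and> prefix \<rho> \<tau> \<and> C \<tau> = c"
    by blast
  then show ?thesis using cS(1) by (intro exI[of _ c] conjI exI[of _ S'])
qed

lemma homogeneous_witness_glue:
  assumes fin: "finite X" "finite G" "finite B" and ne: "X \<noteq> {}" "G \<noteq> {}" "B \<noteq> {}"
    and XG: "\<forall>x\<in>X. \<forall>g\<in>G. x < g" and GB: "\<forall>g\<in>G. \<forall>b\<in>B. g < b"
    and wX: "homogeneous_witness k X Y" "Y \<subseteq> X"
    and wG: "homogeneous_witness k G YG" "YG \<subseteq> G" "2 \<le> card YG"
    and wB: "homogeneous_witness k B YB" "YB \<subseteq> B"
  shows "homogeneous_witness k (X \<union> G \<union> B) (Y \<union> YB)"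
  unfolding homogeneous_witness_def
proof (intro allI impI, elim conjE)
  fix T and C :: "bool list \<Rightarrow> nat"
  let ?U = "X \<union> G \<union> B"
  assume qU: "quasistrong ?U T" and C: "\<forall>\<sigma>\<in>T. length \<sigma> = Max ?U \<longrightarrow> C \<sigma> < k"
  note blocks = quasistrong_three_blocks[OF qU fin ne XG GB]
  have "\<forall>\<pi>\<in>{\<pi>\<in>T. length \<pi> = Max X}. \<exists>c R FB. c < k \<and> card R = 2 \<and>
    (\<forall>\<rho>\<in>R. \<rho> \<in> T \<and> length \<rho> = Max G \<and> prefix \<pi> \<rho> \<and> FB \<rho> \<subseteq> T \<and> rooted_frontier YB \<rho> (FB \<rho>) \<and>
      (\<forall>f\<in>FB \<rho>. \<exists>\<tau>\<in>T. length \<tau> = Max B \<and> prefix f \<tau> \<and> C \<tau> = c))"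
  proof
    fix \<pi> assume "\<pi> \<in> {\<pi>\<in>T. length \<pi> = Max X}"
    then have \<pi>: "\<pi> \<in> T" "length \<pi> = Max X" by simp_all
    have sub: "G \<subseteq> ?U" "B \<subseteq> ?U" "length \<pi> \<in> ?U" using \<pi>(2) fin(1) ne(1) by auto
    have "Max G < Min B" "Max X < Min G" using XG GB fin ne by simp_all
    with homogeneous_split_in_cone[OF qU blocks(2,3) sub(1,2) _ blocks(4)[symmetric] C wG wB \<pi>(1) sub(3)] \<pi>(2)
    show "\<exists>c R FB. c < k \<and> card R = 2 \<and>
      (\<forall>\<rho>\<in>R. \<rho> \<in> T \<and> length \<rho> = Max G \<and> prefix \<pi> \<rho> \<and> FB \<rho> \<subseteq> T \<and> rooted_frontier YB \<rho> (FB \<rho>) \<and>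
        (\<forall>f\<in>FB \<rho>. \<exists>\<tau>\<in>T. length \<tau> = Max B \<and> prefix f \<tau> \<and> C \<tau> = c))"
      by simp
  qed
  from bchoice[OF this] obtain cG where "\<forall>\<pi>\<in>{\<pi>\<in>T. length \<pi> = Max X}. \<exists>R FB. cG \<pi> < k \<and> card R = 2 \<and>
    (\<forall>\<rho>\<in>R. \<rho> \<in> T \<and> length \<rho> = Max G \<and> prefix \<pi> \<rho> \<and> FB \<rho> \<subseteq> T \<and> rooted_frontier YB \<rho> (FB \<rho>) \<and>
      (\<forall>f\<in>FB \<rho>. \<exists>\<tau>\<in>T. length \<tau> = Max B \<and> prefix f \<tau> \<and> C \<tau> = cG \<pi>))"
    by blast
  from bchoice[OF this] obtain R where "\<forall>\<pi>\<in>{\<pi>\<in>T. length \<pi> = Max X}. \<exists>FB. cG \<pi> < k \<and> card (R \<pi>) = 2 \<and>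
    (\<forall>\<rho>\<in>R \<pi>. \<rho> \<in> T \<and> length \<rho> = Max G \<and> prefix \<pi> \<rho> \<and> FB \<rho> \<subseteq> T \<and> rooted_frontier YB \<rho> (FB \<rho>) \<and>
      (\<forall>f\<in>FB \<rho>. \<exists>\<tau>\<in>T. length \<tau> = Max B \<and> prefix f \<tau> \<and> C \<tau> = cG \<pi>))"
    by blast
  from bchoice[OF this] obtain FB where splits: "\<forall>\<pi>\<in>{\<pi>\<in>T. length \<pi> = Max X}. cG \<pi> < k \<and> card (R \<pi>) = 2 \<and>
    (\<forall>\<rho>\<in>R \<pi>. \<rho> \<in> T \<and> length \<rho> = Max G \<and> prefix \<pi> \<rho> \<and> FB \<pi> \<rho> \<subseteq> T \<and>
      rooted_frontier YB \<rho> (FB \<pi> \<rho>) \<and> (\<forall>f\<in>FB \<pi> \<rho>. \<exists>\<tau>\<in>T. length \<tau> = Max B \<and> prefix f \<tau> \<and> C \<tau> = cG \<pi>))"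
    by blast
  have "\<forall>x\<in>X. x < Max G" "\<forall>b\<in>YB. Max G < b" using XG GB wB(2) fin ne by auto
  from homogeneous_subtree_of_splits[OF blocks(1) quasistrongD(4)[OF qU] wX this splits]
  show "\<exists>c<k. \<exists>S. S \<subseteq> T \<and> quasistrong (Y \<union> YB) S \<and>
      (\<forall>\<rho>\<in>leaves S. \<exists>\<tau>\<in>T. length \<tau> = Max ?U \<and> prefix \<rho> \<tau> \<and> C \<tau> = c)"
    unfolding blocks(4) .
qed

section \<open>Stacks and largeness\<close>

lemma is_stack_iff_sorted_wrt:
  "is_stack Xs \<longleftrightarrow>
     (\<forall>Y\<in>set Xs. finite Y \<and> Y \<noteq> {}) \<and> sorted_wrt (\<lambda>A B. \<forall>x\<in>A. \<forall>y\<in>B. x < y) Xs"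
proof (cases "\<forall>Y\<in>set Xs. finite Y \<and> Y \<noteq> {}")
  case True
  define P where "P A B \<longleftrightarrow> A \<noteq> {} \<and> B \<noteq> {} \<and> (\<forall>x\<in>A. \<forall>y\<in>B. (x::nat) < y)" for A B
  have "transp P" unfolding P_def transp_def by (meson all_not_in_conv order.strict_trans)
  have "sorted_wrt (\<lambda>A B. \<forall>x\<in>A. \<forall>y\<in>B. x < y) Xs \<longleftrightarrow> sorted_wrt P Xs"
    using True sorted_wrt_mono_rel[of Xs "\<lambda>A B. \<forall>x\<in>A. \<forall>y\<in>B. x < y" P]
      sorted_wrt_mono_rel[of Xs P "\<lambda>A B. \<forall>x\<in>A. \<forall>y\<in>B. x < y"]
    unfolding P_def by blast
  also have "\<dots> \<longleftrightarrow> (\<forall>l. Suc l < length Xs \<longrightarrow> P (Xs ! l) (Xs ! Suc l))"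
    by (rule sorted_wrt_iff_nth_Suc_transp[OF \<open>transp P\<close>])
  also have "\<dots> \<longleftrightarrow> (\<forall>l. Suc l < length Xs \<longrightarrow> Max (Xs ! l) < Min (Xs ! Suc l))"
  proof -
    have "P (Xs ! l) (Xs ! Suc l) \<longleftrightarrow> Max (Xs ! l) < Min (Xs ! Suc l)" if "Suc l < length Xs" for l
    proof -
      have "finite (Xs ! l)" "Xs ! l \<noteq> {}" "finite (Xs ! Suc l)" "Xs ! Suc l \<noteq> {}"
        using True nth_mem[of l Xs] nth_mem[of "Suc l" Xs] that by auto
      then show ?thesis unfolding P_def by (auto simp: Max_less_iff Min_gr_iff)
    qed
    then show ?thesis by blast
  qed
  finally show ?thesis using True unfolding is_stack_def by blast
qed (auto simp: is_stack_def)

lemma stack_less: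
  assumes "is_stack Xs" "l < l'" "l' < length Xs" "x \<in> Xs ! l" "y \<in> Xs ! l'"
  shows "x < y"
  using assms unfolding is_stack_iff_sorted_wrt sorted_wrt_iff_nth_less by blast

lemma stack_nth_finite_nonempty: "is_stack Xs \<Longrightarrow> l < length Xs \<Longrightarrow> finite (Xs ! l) \<and> Xs ! l \<noteq> {}"
  unfolding is_stack_def by simp

lemma stack_Union_finite_nonempty: "is_stack Xs \<Longrightarrow> Xs \<noteq> [] \<Longrightarrow> finite (\<Union>(set Xs)) \<and> \<Union>(set Xs) \<noteq> {}"
  unfolding is_stack_def by (auto simp: neq_Nil_conv)

lemma omega_mult_large_Union:
  assumes "is_stack Xs" "\<forall>Y\<in>set Xs. omega_mult_large d m Y"
  shows "omega_mult_large d (m * length Xs) (\<Union>(set Xs))"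
  using assms
proof (induction Xs)
  case Nil
  show ?case unfolding omega_mult_large_def by (intro exI[of _ "[]"]) (simp add: is_stack_def)
next
  case (Cons A Xs)
  from Cons.prems(1) have "is_stack Xs" and A_below: "\<forall>x\<in>A. \<forall>y\<in>\<Union>(set Xs). x < y"
    unfolding is_stack_iff_sorted_wrt by auto
  obtain Ws where Ws: "is_stack Ws" "length Ws = m * length Xs" "\<forall>W\<in>set Ws. omega_pow_large d W"
    "\<Union>(set Xs) = \<Union>(set Ws)"
    using Cons.IH[OF \<open>is_stack Xs\<close>] Cons.prems(2) unfolding omega_mult_large_def by auto
  obtain Vs where Vs: "is_stack Vs" "length Vs = m" "\<forall>V\<in>set Vs. omega_pow_large d V" "A = \<Union>(set Vs)"
    using Cons.prems(2) unfolding omega_mult_large_def by auto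
  have "is_stack (Vs @ Ws)"
    using Vs(1,4) Ws(1,4) A_below unfolding is_stack_iff_sorted_wrt sorted_wrt_append by auto
  then show ?case
    unfolding omega_mult_large_def using Vs Ws by (intro exI[of _ "Vs @ Ws"]) auto
qed

lemma persistent_finite_nonempty: "persistent d m k i X \<Longrightarrow> finite X \<and> X \<noteq> {}"
  by (cases i) (simp_all add: persistent_Suc_iff)

lemma persistent_large_subset: "persistent d m k i X \<Longrightarrow> \<exists>Z\<subseteq>X. omega_mult_large d m Z"
  by (induction i arbitrary: X) (auto simp: persistent_Suc_iff, meson order.trans)

lemma large_aux_card_ge_2:
  assumes "large_aux e W" "0 \<notin> W"
  shows "2 \<le> card W"
proof -
  have "finite W \<and> W \<noteq> {}" using assms(1) by (cases e) simp_all
  then have W: "finite W" "W \<noteq> {}" and "Min W \<in> W" by simp_all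
  then have "0 < Min W" using assms(2) by (metis gr0I)
  have "W - {Min W} \<noteq> {}"
  proof (cases e)
    case 0
    then have "Min W < card W" using assms(1) by simp
    then have "1 < card W" using \<open>0 < Min W\<close> by linarith
    show ?thesis
    proof
      assume "W - {Min W} = {}"
      then have "card W \<le> card {Min W}" using card_mono[of "{Min W}" W] by blast
      with \<open>1 < card W\<close> show False by simp
    qed
  next
    case (Suc e')
    then obtain Xs where "is_stack Xs" "length Xs = Min W" "W - {Min W} = \<Union>(set Xs)"
      using assms(1) by auto
    then show ?thesis using stack_Union_finite_nonempty \<open>0 < Min W\<close> by (metis less_not_refl list.size(3))
  qed
  then obtain a where "a \<in> W - {Min W}" by blast
  then have "{Min W, a} \<subseteq> W" "card {Min W, a} = 2" using \<open>Min W \<in> W\<close> by auto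
  then show ?thesis using card_mono[OF W(1)] by metis
qed

lemma persistent_card_ge_2:
  assumes "persistent d m k i Y" "d \<ge> 1" "m \<ge> 1" "0 \<notin> Y"
  shows "2 \<le> card Y"
proof -
  obtain Z Ws where "Z \<subseteq> Y" "length Ws = m" "\<forall>W\<in>set Ws. omega_pow_large d W" "Z = \<Union>(set Ws)"
    using persistent_large_subset[OF assms(1)] unfolding omega_mult_large_def by blast
  moreover have "Ws ! 0 \<in> set Ws" using \<open>length Ws = m\<close> assms(3) by simp
  ultimately have "large_aux (d - 1) (Ws ! 0)" "Ws ! 0 \<subseteq> Y"
    unfolding omega_pow_large_def by blast+
  then have "2 \<le> card (Ws ! 0)" using large_aux_card_ge_2 assms(4) by blast
  then show ?thesis
    using card_mono[OF conjunct1[OF persistent_finite_nonempty[OF assms(1)]] \<open>Ws ! 0 \<subseteq> Y\<close>] by simp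
qed

section \<open>Stacks of persistent sets\<close>

lemma homogeneous_witness_chain:
  assumes st: "is_stack Xs"
    and W: "\<And>l. l < length Xs \<Longrightarrow> W l \<subseteq> Xs ! l \<and> homogeneous_witness k (Xs ! l) (W l)"
    and split: "\<And>l. l < length Xs \<Longrightarrow> odd l \<Longrightarrow> 2 \<le> card (W l)"
  shows "2 * j < length Xs \<Longrightarrow> homogeneous_witness k (\<Union>l\<le>2*j. Xs ! l) (\<Union>i\<le>j. W (2*i))"
proof (induction j)
  case 0
  then show ?case using W by simp
next
  case (Suc j)
  let ?X = "\<Union>l\<le>2*j. Xs ! l" and ?G = "Xs ! (2*j+1)" and ?B = "Xs ! (2*j+2)"
  have lt: "2*j < length Xs" "2*j+1 < length Xs" "2*j+2 < length Xs" using Suc.prems by simp_all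
  have fin: "finite ?X" "finite ?G" "finite ?B" and ne: "?X \<noteq> {}" "?G \<noteq> {}" "?B \<noteq> {}"
    using stack_nth_finite_nonempty[OF st] lt by fastforce+
  have XG: "\<forall>x\<in>?X. \<forall>g\<in>?G. x < g"
  proof (intro ballI)
    fix x g assume "x \<in> ?X" "g \<in> ?G"
    then obtain l where "l \<le> 2*j" "x \<in> Xs ! l" by blast
    moreover have "l < 2*j+1" using \<open>l \<le> 2*j\<close> by simp
    ultimately show "x < g" using stack_less[OF st _ lt(2) _ \<open>g \<in> ?G\<close>] by blast
  qed
  have GB: "\<forall>g\<in>?G. \<forall>b\<in>?B. g < b"
    using stack_less[OF st _ lt(3), of "2*j+1"] by simp
  have "(\<Union>i\<le>j. W (2*i)) \<subseteq> ?X"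
  proof (rule UN_least)
    fix i assume "i \<in> {..j}"
    then have "2*i \<le> 2*j" "2*i < length Xs" using lt(1) by simp_all
    then show "W (2*i) \<subseteq> ?X" using conjunct1[OF W[OF \<open>2*i < length Xs\<close>]] by blast
  qed
  then have "homogeneous_witness k (?X \<union> ?G \<union> ?B) ((\<Union>i\<le>j. W (2*i)) \<union> W (2*j+2))"
    using homogeneous_witness_glue[OF fin ne XG GB Suc.IH[OF lt(1)] _
        conjunct2[OF W[OF lt(2)]] conjunct1[OF W[OF lt(2)]] split[OF lt(2)]
        conjunct2[OF W[OF lt(3)]] conjunct1[OF W[OF lt(3)]]] by simp
  moreover have "(\<Union>l\<le>2 * Suc j. Xs ! l) = ?X \<union> ?G \<union> ?B"
    by (auto simp: le_Suc_eq)
  moreover have "(\<Union>i\<le>Suc j. W (2*i)) = (\<Union>i\<le>j. W (2*i)) \<union> W (2*j+2)"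
    by (simp add: atMost_Suc Un_commute)
  ultimately show ?case by simp
qed

lemma stack_even_witnesses:
  assumes st: "is_stack Xs" and len: "length Xs = 2 * M + 1" and "d \<ge> 1" "m \<ge> 1"
    and pers: "\<forall>l<length Xs. persistent d m k (Suc i) (Xs ! l)"
  obtains Ys where "is_stack Ys" "length Ys = M + 1" "\<forall>l<length Ys. persistent d m k i (Ys ! l)"
    "\<Union>(set Ys) \<subseteq> \<Union>(set Xs)" "homogeneous_witness k (\<Union>(set Xs)) (\<Union>(set Ys))"
proof -
  have "\<forall>l\<in>{..<length Xs}. \<exists>Y. Y \<subseteq> Xs ! l \<and> persistent d m k i Y \<and> homogeneous_witness k (Xs ! l) Y"
    using pers unfolding persistent_Suc_iff lessThan_iff by blast
  from bchoice[OF this] obtain W where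
    W: "\<forall>l\<in>{..<length Xs}. W l \<subseteq> Xs ! l \<and> persistent d m k i (W l) \<and> homogeneous_witness k (Xs ! l) (W l)"
    by blast
  have split: "2 \<le> card (W l)" if "l < length Xs" "odd l" for l
  proof -
    obtain x where "x \<in> Xs ! 0" using stack_nth_finite_nonempty[OF st] len by fastforce
    then have "0 \<notin> Xs ! l" using stack_less[OF st _ that(1), of 0 x 0] \<open>odd l\<close> by (metis odd_pos less_nat_zero_code)
    then show ?thesis using W that(1) persistent_card_ge_2 \<open>d \<ge> 1\<close> \<open>m \<ge> 1\<close> by blast
  qed
  define Ys where "Ys = map (\<lambda>j. W (2*j)) [0..<M+1]"
  have Ys: "length Ys = M + 1" "\<And>j. j < M + 1 \<Longrightarrow> Ys ! j = W (2*j)" unfolding Ys_def by (simp_all del: upt_Suc)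
  have pers_Ys: "\<forall>l<length Ys. persistent d m k i (Ys ! l)" using W Ys len by simp
  have "is_stack Ys"
    unfolding is_stack_iff_sorted_wrt sorted_wrt_iff_nth_less
  proof (intro conjI allI impI ballI)
    fix Y assume "Y \<in> set Ys"
    then obtain l where "l < length Ys" "Y = Ys ! l" by (auto simp: in_set_conv_nth)
    then show "finite Y" "Y \<noteq> {}" using pers_Ys persistent_finite_nonempty by blast+
  next
    fix j j' x y assume jj: "j < j'" "j' < length Ys" and xy: "x \<in> Ys ! j" "y \<in> Ys ! j'"
    have lt: "2*j < 2*j'" "2*j' < length Xs" "2*j < length Xs" using jj Ys(1) len by simp_all
    have "x \<in> Xs ! (2*j)" "y \<in> Xs ! (2*j')" using xy Ys jj W lt by auto
    then show "x < y" using stack_less[OF st lt(1,2)] by blast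
  qed
  moreover have "\<Union>(set Ys) = (\<Union>i\<le>M. W (2*i))"
    unfolding Ys_def by (simp del: upt_Suc add: atLeast0LessThan lessThan_Suc_atMost)
  moreover have "\<Union>(set Xs) = (\<Union>l\<le>2*M. Xs ! l)"
    using nth_image[of "length Xs" Xs] len by (simp add: atLeast0LessThan lessThan_Suc_atMost)
  moreover have "(\<Union>i\<le>M. W (2*i)) \<subseteq> (\<Union>l\<le>2*M. Xs ! l)" using W len by fastforce
  moreover have "W l \<subseteq> Xs ! l \<and> homogeneous_witness k (Xs ! l) (W l)" if "l < length Xs" for l
    using W that by simp
  then have "homogeneous_witness k (\<Union>l\<le>2*M. Xs ! l) (\<Union>i\<le>M. W (2*i))"
    using homogeneous_witness_chain[of Xs W k M, OF st _ split] len by simp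
  ultimately show thesis using that Ys(1) pers_Ys by simp
qed

theorem lemma2p10:
  fixes d m n k i :: nat and Xs :: "nat set list"
  assumes "d \<ge> 1" and "m \<ge> 1" and "n \<ge> 1" and "k \<ge> 1"
    and "is_stack Xs"
    and "length Xs = 2 ^ i * n - 2 ^ i + 1"
    and "\<forall>l < length Xs. persistent d m k i (Xs ! l)"
  shows "persistent d (m * n) k i (\<Union>(set Xs))"
  using assms(5-7)
proof (induction i arbitrary: Xs)
  case 0
  then have "length Xs = n" using \<open>n \<ge> 1\<close> by simp
  moreover have "\<forall>Y\<in>set Xs. omega_mult_large d m Y" using 0(3) by (auto simp: in_set_conv_nth)
  ultimately have "omega_mult_large d (m * n) (\<Union>(set Xs))" using omega_mult_large_Union[OF 0(1)] by simp
  moreover have "Xs \<noteq> []" using \<open>length Xs = n\<close> \<open>n \<ge> 1\<close> by auto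
  ultimately show ?case using stack_Union_finite_nonempty[OF 0(1)] by simp
next
  case (Suc i)
  have "length Xs = 2 * (2 ^ i * n - 2 ^ i) + 1"
    using Suc.prems(2) by (simp add: diff_mult_distrib2)
  from stack_even_witnesses[OF Suc.prems(1) this assms(1,2) Suc.prems(3)]
  obtain Ys where Ys: "is_stack Ys" "length Ys = 2 ^ i * n - 2 ^ i + 1"
    "\<forall>l<length Ys. persistent d m k i (Ys ! l)"
    and witness: "\<Union>(set Ys) \<subseteq> \<Union>(set Xs)" "homogeneous_witness k (\<Union>(set Xs)) (\<Union>(set Ys))"
    by metis
  have "persistent d (m * n) k i (\<Union>(set Ys))" using Suc.IH[OF Ys] .
  moreover have "Xs \<noteq> []" using Suc.prems(2) by auto
  ultimately show ?case
    using stack_Union_finite_nonempty[OF Suc.prems(1)] witness unfolding persistent_Suc_iff by blast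
qed

end
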